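(* There is a universal constant $K_2>0$ such that for all $\alpha_m>0$, $\theta\in(0,1)$ and $h,\alpha_s,\eta>0$, \[ E^{1D}_{h,\alpha_s,\eta,\theta}\le \min\left(\alpha_m\eta^2,\ \alpha_m\eta^2\theta+K_2\frac{h^2\eta}{1-\theta}\right)h . \] The first bound is attained by $u=w=0$; the second by taking $u=w=0$ on a bonded interval of length $\theta$ and a single blister with zero value of $|w_x+\frac12u_x^2-\eta|$ on the complementary interval of length $1-\theta$.
   Context: Let $\mathbb T^1=\mathbb R/\mathbb Z$. Fix parameters $\alpha_m>0$, $h>0$, $\alpha_s>0$, $\eta>0$ and $\theta\in(0,1)$. The admissible class $\mathcal A^{1D}$ consists of triples $(w,u,\Omega)$ with $w\in H^1(\mathbb T^1;\mathbb R)$, $u\in H^2(\mathbb T^1;[0,\infty))$, $\Omega\subset\mathbb T^1$ closed with Lebesgue measure $|\Omega|=\theta$, and $u=0$ on $\Omega$. The energy is \[ E^{1D}[w,u,\Omega]=\alpha_m h\int_0^1\Big|w_x+\tfrac12 u_x^2-\eta\Big|^2dx+h^3\int_0^1|u_{xx}|^2dx+\alpha_s\Big(\int_\Omega|w_x|^2dx\Big)^{1/2}\Big(\int_\Omega|w|^2dx\Big)^{1/2}, \] and $E^{1D}_{h,\alpha_s,\eta,\theta}:=\inf_{(w,u,\Omega)\in\mathcal A^{1D}}E^{1D}[w,u,\Omega]$. *)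

theory Defs
  imports "HOL-Analysis.Analysis"
begin

text \<open>T^1 = R/Z is represented by the interval [0,1] with endpoints identified.\<close>

definition H1_per :: "(real \<Rightarrow> real) \<Rightarrow> (real \<Rightarrow> real) \<Rightarrow> bool" where
  "H1_per f f' \<longleftrightarrow>
     set_integrable lborel {0..1} f' \<and>
     set_integrable lborel {0..1} (\<lambda>x. (f' x)^2) \<and>
     (\<forall>x\<in>{0..1}. f x = f 0 + (LINT t:{0..x}|lborel. f' t)) \<and>
     f 1 = f 0"

definition H2_per :: "(real \<Rightarrow> real) \<Rightarrow> (real \<Rightarrow> real) \<Rightarrow> (real \<Rightarrow> real) \<Rightarrow> bool" where
  "H2_per f f' f'' \<longleftrightarrow> H1_per f f' \<and> H1_per f' f''"

definition closed_T1 :: "real set \<Rightarrow> bool" where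
  "closed_T1 S \<longleftrightarrow> closed S \<and> S \<subseteq> {0..1} \<and> (0 \<in> S \<longleftrightarrow> 1 \<in> S)"

definition admissible_1D ::
  "real \<Rightarrow> (real \<Rightarrow> real) \<Rightarrow> (real \<Rightarrow> real) \<Rightarrow> (real \<Rightarrow> real) \<Rightarrow> (real \<Rightarrow> real)
   \<Rightarrow> (real \<Rightarrow> real) \<Rightarrow> real set \<Rightarrow> bool" where
  "admissible_1D \<theta> w w' u u' u'' \<Omega> \<longleftrightarrow>
     H1_per w w' \<and> H2_per u u' u'' \<and> (\<forall>x\<in>{0..1}. u x \<ge> 0) \<and>
     closed_T1 \<Omega> \<and> measure lborel \<Omega> = \<theta> \<and> (\<forall>x\<in>\<Omega>. u x = 0)"

definition energy_1D ::
  "real \<Rightarrow> real \<Rightarrow> real \<Rightarrow> real \<Rightarrow> (real \<Rightarrow> real) \<Rightarrow> (real \<Rightarrow> real) \<Rightarrow> (real \<Rightarrow> real)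
   \<Rightarrow> (real \<Rightarrow> real) \<Rightarrow> real set \<Rightarrow> real" where
  "energy_1D \<alpha>m h \<alpha>s \<eta> w w' u' u'' \<Omega> =
     \<alpha>m * h * (LINT x:{0..1}|lborel. (w' x + (u' x)^2 / 2 - \<eta>)^2)
     + h^3 * (LINT x:{0..1}|lborel. (u'' x)^2)
     + \<alpha>s * sqrt (LINT x:\<Omega>|lborel. (w' x)^2) * sqrt (LINT x:\<Omega>|lborel. (w x)^2)"

definition E_inf_1D :: "real \<Rightarrow> real \<Rightarrow> real \<Rightarrow> real \<Rightarrow> real \<Rightarrow> real" where
  "E_inf_1D \<alpha>m h \<alpha>s \<eta> \<theta> =
     Inf {energy_1D \<alpha>m h \<alpha>s \<eta> w w' u' u'' \<Omega> | w w' u u' u'' \<Omega>.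
            admissible_1D \<theta> w w' u u' u'' \<Omega>}"

end

theory Submission
  imports Defs
begin

text \<open>Both bounds come from explicit competitors. With \<open>u = w = 0\<close> and any bonded set, only
  the membrane term \<open>\<alpha>m h \<eta>\<^sup>2\<close> survives. For the second bound, bond \<open>\<Omega> = [1 - \<theta>, 1]\<close>
  (which on the circle also contains \<open>0\<close>) and place on \<open>[0, L]\<close>, \<open>L = 1 - \<theta>\<close>, the blister
  \<open>u = c x\<^sup>2 (L - x)\<^sup>2\<close> together with \<open>w' = \<eta> - u'\<^sup>2/2\<close>. The amplitude \<open>c\<close> is tuned so that
  \<open>\<integral>\<^sub>0\<^sup>L u'\<^sup>2/2 = \<eta> L\<close>; then \<open>w\<close> vanishes at both ends of the blister, the membrane term is
  paid only on \<open>\<Omega>\<close>, the bonding term is zero since \<open>w = 0\<close> on \<open>\<Omega>\<close>, and the bending term is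
  \<open>h\<^sup>3 \<integral> u''\<^sup>2 = 84 h\<^sup>3 \<eta> / (1 - \<theta>)\<close>.\<close>

lemma set_integral_truncated:
  fixes g :: "real \<Rightarrow> real"
  assumes g: "continuous_on UNIV g" and L: "0 \<le> L" "L \<le> x"
  shows "set_integrable lborel {0..x} (\<lambda>t. if t \<le> L then g t else c)"
    and "(LINT t:{0..x}|lborel. (if t \<le> L then g t else c)) = (LINT t:{0..L}|lborel. g t) + c * (x - L)"
proof -
  let ?f = "\<lambda>t. if t \<le> L then g t else c"
  have "set_integrable lborel {0..L} g"
    unfolding set_integrable_def
    by (rule borel_integrable_compact) (auto intro: continuous_on_subset[OF g])
  then have left: "set_integrable lborel {0..L} ?f"
    by (rule set_integrable_cong[THEN iffD1, rotated -1]) auto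
  have "set_integrable lborel {L..x} (\<lambda>t. c)"
    unfolding set_integrable_def by (rule borel_integrable_compact) auto
  then have "set_integrable lborel {L<..x} (\<lambda>t. c)"
    by (rule set_integrable_subset) auto
  then have right: "set_integrable lborel {L<..x} ?f"
    by (rule set_integrable_cong[THEN iffD1, rotated -1]) auto
  have split: "{0..x} = {0..L} \<union> {L<..x}" using L by auto
  show "set_integrable lborel {0..x} ?f"
    unfolding split by (rule set_integrable_Un[OF left right]) auto
  have "(LINT t:{0..x}|lborel. ?f t) = (LINT t:{0..L}|lborel. ?f t) + (LINT t:{L<..x}|lborel. ?f t)"
    unfolding split by (rule set_integral_Un[OF _ left right]) auto
  also have "(LINT t:{0..L}|lborel. ?f t) = (LINT t:{0..L}|lborel. g t)"
    by (rule set_lebesgue_integral_cong) auto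
  also have "(LINT t:{L<..x}|lborel. ?f t) = (LINT t:{L<..x}|lborel. c)"
    by (rule set_lebesgue_integral_cong) auto
  also have "\<dots> = c * (x - L)"
    using L by (subst set_integral_const) auto
  finally show "(LINT t:{0..x}|lborel. ?f t) = (LINT t:{0..L}|lborel. g t) + c * (x - L)" .
qed

lemma set_integral_Icc_FTC:
  fixes g G :: "real \<Rightarrow> real"
  assumes "\<And>x. (G has_real_derivative g x) (at x)" "continuous_on UNIV g" "0 \<le> x"
  shows "(LINT t:{0..x}|lborel. g t) = G x - G 0"
proof -
  have "(LBINT t=ereal 0..ereal x. g t) = G x - G 0"
    by (rule interval_integral_FTC_finite)
      (use assms in \<open>auto intro: continuous_on_subset has_vector_derivative_at_within has_field_derivative_at_within
          simp: has_real_derivative_iff_has_vector_derivative[symmetric]\<close>)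
  then show ?thesis using assms(3) interval_integral_Icc[of 0 x g] by simp
qed

lemma H1_per_truncated:
  fixes g G :: "real \<Rightarrow> real"
  assumes L: "0 \<le> L" "L \<le> 1" and G': "\<And>x. (G has_real_derivative g x) (at x)"
    and g: "continuous_on UNIV g" and G0: "G 0 = 0" and GL: "G L = 0"
  shows "H1_per (\<lambda>x. if x \<le> L then G x else 0) (\<lambda>x. if x \<le> L then g x else 0)"
  unfolding H1_per_def
proof (intro conjI ballI)
  show "set_integrable lborel {0..1} (\<lambda>x. if x \<le> L then g x else 0)"
    using set_integral_truncated(1)[OF g L] .
  have "continuous_on UNIV (\<lambda>x. (g x)^2)" using g by (intro continuous_intros)
  moreover have "(\<lambda>x. (if x \<le> L then g x else 0)^2) = (\<lambda>x. if x \<le> L then (g x)^2 else 0)"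
    by auto
  ultimately show "set_integrable lborel {0..1} (\<lambda>x. (if x \<le> L then g x else 0)^2)"
    using set_integral_truncated(1)[OF _ L] by metis
  show "(if 1 \<le> L then G 1 else 0) = (if 0 \<le> L then G 0 else 0)"
    using L G0 GL by auto
  fix x :: real assume x: "x \<in> {0..1}"
  show "(if x \<le> L then G x else 0) = (if 0 \<le> L then G 0 else 0) +
      (LINT t:{0..x}|lborel. (if t \<le> L then g t else 0))"
  proof (cases "x \<le> L")
    case True
    have "(LINT t:{0..x}|lborel. (if t \<le> L then g t else 0)) = (LINT t:{0..x}|lborel. g t)"
      using True by (intro set_lebesgue_integral_cong) auto
    also have "\<dots> = G x - G 0" using set_integral_Icc_FTC[OF G' g] x by auto
    finally show ?thesis using True L G0 by simp
  next
    case False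
    have "(LINT t:{0..x}|lborel. (if t \<le> L then g t else 0)) = (LINT t:{0..L}|lborel. g t)"
      using set_integral_truncated(2)[OF g L(1), of x 0] False by simp
    also have "\<dots> = G L - G 0" using set_integral_Icc_FTC[OF G' g L(1)] .
    finally show ?thesis using False L G0 GL by simp
  qed
qed

definition blister_height :: "real \<Rightarrow> real \<Rightarrow> real \<Rightarrow> real" where
  "blister_height c L x = c * x^2 * (L - x)^2"

definition blister_slope :: "real \<Rightarrow> real \<Rightarrow> real \<Rightarrow> real" where
  "blister_slope c L x = 2 * c * x * (L - x) * (L - 2 * x)"

definition blister_curvature :: "real \<Rightarrow> real \<Rightarrow> real \<Rightarrow> real" where
  "blister_curvature c L x = 2 * c * (L^2 - 6 * L * x + 6 * x^2)"

definition blister_stretching :: "real \<Rightarrow> real \<Rightarrow> real \<Rightarrow> real" where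
  "blister_stretching c L x =
     2 * c^2 * (L^4 * x^3 / 3 - 3 * L^3 * x^4 / 2 + 13 * L^2 * x^5 / 5 - 2 * L * x^6 + 4 * x^7 / 7)"

definition blister_bending :: "real \<Rightarrow> real \<Rightarrow> real \<Rightarrow> real" where
  "blister_bending c L x =
     4 * c^2 * (L^4 * x - 6 * L^3 * x^2 + 16 * L^2 * x^3 - 18 * L * x^4 + 36 * x^5 / 5)"

lemma has_real_derivative_blister_height:
  "(blister_height c L has_real_derivative blister_slope c L x) (at x)"
  unfolding blister_height_def blister_slope_def
  by (auto intro!: derivative_eq_intros simp: algebra_simps power2_eq_square)

lemma has_real_derivative_blister_slope:
  "(blister_slope c L has_real_derivative blister_curvature c L x) (at x)"
  unfolding blister_slope_def blister_curvature_def
  by (auto intro!: derivative_eq_intros simp: algebra_simps power2_eq_square)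

lemma has_real_derivative_blister_stretching:
  "(blister_stretching c L has_real_derivative (blister_slope c L x)^2 / 2) (at x)"
  unfolding blister_stretching_def blister_slope_def
  by (auto intro!: derivative_eq_intros
      simp: algebra_simps power2_eq_square power3_eq_cube power4_eq_xxxx power_numeral_reduce)

lemma has_real_derivative_blister_bending:
  "(blister_bending c L has_real_derivative (blister_curvature c L x)^2) (at x)"
  unfolding blister_bending_def blister_curvature_def
  by (auto intro!: derivative_eq_intros
      simp: algebra_simps power2_eq_square power3_eq_cube power4_eq_xxxx power_numeral_reduce)

lemma continuous_on_blister_slope: "continuous_on UNIV (blister_slope c L)"
  unfolding blister_slope_def by (intro continuous_intros)

lemma continuous_on_blister_curvature: "continuous_on UNIV (blister_curvature c L)"
  unfolding blister_curvature_def by (intro continuous_intros)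

lemma blister_height_nonneg: "0 \<le> c \<Longrightarrow> 0 \<le> blister_height c L x"
  unfolding blister_height_def by simp

lemma blister_endpoints:
  "blister_height c L 0 = 0" "blister_height c L L = 0"
  "blister_slope c L 0 = 0" "blister_slope c L L = 0"
  "blister_stretching c L 0 = 0" "blister_stretching c L L = c^2 * L^7 / 105"
  "blister_bending c L 0 = 0" "blister_bending c L L = 4 * c^2 * L^5 / 5"
  unfolding blister_height_def blister_slope_def blister_stretching_def blister_bending_def
  by (simp_all add: algebra_simps eval_nat_numeral)

lemma energy_1D_nonneg:
  assumes "0 \<le> \<alpha>m" "0 \<le> h" "0 \<le> \<alpha>s"
  shows "0 \<le> energy_1D \<alpha>m h \<alpha>s \<eta> w w' u' u'' \<Omega>"
proof -
  have sq: "0 \<le> (LINT x:A|lborel. (f x)^2)" for A and f :: "real \<Rightarrow> real"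
    unfolding set_lebesgue_integral_def
    by (rule Bochner_Integration.integral_nonneg) (auto simp: indicator_def)
  show ?thesis
    unfolding energy_1D_def using assms
    by (intro add_nonneg_nonneg mult_nonneg_nonneg sq real_sqrt_ge_zero) auto
qed

lemma E_inf_1D_le_energy:
  assumes "0 \<le> \<alpha>m" "0 \<le> h" "0 \<le> \<alpha>s" "admissible_1D \<theta> w w' u u' u'' \<Omega>"
  shows "E_inf_1D \<alpha>m h \<alpha>s \<eta> \<theta> \<le> energy_1D \<alpha>m h \<alpha>s \<eta> w w' u' u'' \<Omega>"
  unfolding E_inf_1D_def
proof (rule cInf_lower)
  show "bdd_below {energy_1D \<alpha>m h \<alpha>s \<eta> w w' u' u'' \<Omega> | w w' u u' u'' \<Omega>.
                     admissible_1D \<theta> w w' u u' u'' \<Omega>}"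
    by (rule bdd_belowI[of _ 0]) (use energy_1D_nonneg[OF assms(1-3)] in auto)
qed (use assms(4) in blast)

lemma closed_T1_bonded_set: "0 \<le> L \<Longrightarrow> L \<le> 1 \<Longrightarrow> closed_T1 ({L..1} \<union> {0})"
  unfolding closed_T1_def by auto

lemma measure_bonded_set: "L \<le> 1 \<Longrightarrow> measure lborel ({L..1} \<union> {0}) = 1 - L"
  by (subst measure_Un_null_set) auto

lemma E_inf_1D_le_flat:
  assumes "0 \<le> \<alpha>m" "0 \<le> h" "0 \<le> \<alpha>s" "0 \<le> \<theta>" "\<theta> \<le> 1"
  shows "E_inf_1D \<alpha>m h \<alpha>s \<eta> \<theta> \<le> \<alpha>m * \<eta>^2 * h"
proof -
  let ?zero = "\<lambda>x::real. 0::real" and ?\<Omega> = "{1 - \<theta>..1} \<union> {0}"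
  have "H1_per ?zero ?zero"
    using H1_per_truncated[of 0 "\<lambda>_. 0" "\<lambda>_. 0"] by simp
  then have "admissible_1D \<theta> ?zero ?zero ?zero ?zero ?zero ?\<Omega>"
    unfolding admissible_1D_def H2_per_def
    using assms closed_T1_bonded_set[of "1 - \<theta>"] measure_bonded_set[of "1 - \<theta>"] by auto
  then have "E_inf_1D \<alpha>m h \<alpha>s \<eta> \<theta> \<le> energy_1D \<alpha>m h \<alpha>s \<eta> ?zero ?zero ?zero ?zero ?\<Omega>"
    using E_inf_1D_le_energy assms by blast
  also have "\<dots> = \<alpha>m * \<eta>^2 * h"
    unfolding energy_1D_def by (simp add: set_integral_const)
  finally show ?thesis .
qed

lemma set_integral_truncated_blister_curvature_sq:
  assumes "0 \<le> L" "L \<le> 1"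
  shows "(LINT x:{0..1}|lborel. (if x \<le> L then blister_curvature c L x else 0)^2) = blister_bending c L L"
proof -
  have "continuous_on UNIV (\<lambda>x. (blister_curvature c L x)^2)"
    by (intro continuous_intros continuous_on_compose2[OF continuous_on_blister_curvature]) auto
  moreover have "(\<lambda>x. (if x \<le> L then blister_curvature c L x else 0)^2)
      = (\<lambda>x. if x \<le> L then (blister_curvature c L x)^2 else 0)"
    by auto
  ultimately show ?thesis
    using set_integral_truncated(2)[of _ L 1 0] set_integral_Icc_FTC[OF has_real_derivative_blister_bending]
      assms by (simp add: blister_endpoints(7))
qed

text \<open>The amplitude for which the blister absorbs exactly the misfit \<open>\<eta> L\<close> of the interval \<open>[0, L]\<close>.\<close>

lemma blister_energies_at_balanced_amplitude:
  assumes L: "0 < L" and \<eta>: "0 \<le> \<eta>" and c: "c = sqrt (105 * \<eta>) / L^3"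
  shows "blister_stretching c L L = \<eta> * L" and "blister_bending c L L = 84 * \<eta> / L"
proof -
  have c_sq: "c^2 * L^6 = 105 * \<eta>"
    unfolding c using L \<eta> by (simp add: power_divide flip: power_mult)
  have "blister_stretching c L L = c^2 * L^6 * L / 105"
    by (simp add: blister_endpoints eval_nat_numeral)
  then show "blister_stretching c L L = \<eta> * L" by (simp add: c_sq)
  have "blister_bending c L L = 4 * (c^2 * L^6) / (5 * L)"
    using L by (simp add: blister_endpoints field_simps eval_nat_numeral)
  then show "blister_bending c L L = 84 * \<eta> / L" by (simp add: c_sq)
qed

lemma E_inf_1D_le_blister:
  assumes \<alpha>m: "0 \<le> \<alpha>m" and h: "0 \<le> h" and \<alpha>s: "0 \<le> \<alpha>s"
    and \<theta>: "0 \<le> \<theta>" "\<theta> < 1" and \<eta>: "0 \<le> \<eta>"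
  shows "E_inf_1D \<alpha>m h \<alpha>s \<eta> \<theta> \<le> \<alpha>m * \<eta>^2 * \<theta> * h + 84 * h^3 * \<eta> / (1 - \<theta>)"
proof -
  define L where "L = 1 - \<theta>"
  have L: "0 \<le> L" "L \<le> 1" "0 < L" using \<theta> unfolding L_def by auto
  define c where "c = sqrt (105 * \<eta>) / L^3"
  have c: "0 \<le> c" unfolding c_def using L \<eta> by auto
  note balanced = blister_energies_at_balanced_amplitude[OF L(3) \<eta> c_def]
  define cut :: "(real \<Rightarrow> real) \<Rightarrow> real \<Rightarrow> real" where "cut f x = (if x \<le> L then f x else 0)" for f x
  define w where "w = cut (\<lambda>x. \<eta> * x - blister_stretching c L x)"
  define w' where "w' = cut (\<lambda>x. \<eta> - (blister_slope c L x)^2 / 2)"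
  define \<Omega> where "\<Omega> = {L..1} \<union> {0::real}"
  have "H1_per w w'"
    unfolding w_def w'_def cut_def
    by (rule H1_per_truncated[OF L(1,2)])
      (auto intro!: derivative_eq_intros has_real_derivative_blister_stretching continuous_intros
        continuous_on_compose2[OF continuous_on_blister_slope]
        simp: blister_endpoints(5) balanced(1))
  moreover have "H2_per (cut (blister_height c L)) (cut (blister_slope c L)) (cut (blister_curvature c L))"
    unfolding H2_per_def cut_def
    by (intro conjI H1_per_truncated[OF L(1,2)] has_real_derivative_blister_height
        has_real_derivative_blister_slope continuous_on_blister_slope continuous_on_blister_curvature)
      (simp_all add: blister_endpoints)
  ultimately have "admissible_1D \<theta> w w' (cut (blister_height c L)) (cut (blister_slope c L))
      (cut (blister_curvature c L)) \<Omega>"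
    unfolding admissible_1D_def \<Omega>_def
    using closed_T1_bonded_set[OF L(1,2)] measure_bonded_set[OF L(2)] c
    by (auto simp: cut_def L_def blister_height_nonneg blister_endpoints)
  then have "E_inf_1D \<alpha>m h \<alpha>s \<eta> \<theta>
      \<le> energy_1D \<alpha>m h \<alpha>s \<eta> w w' (cut (blister_slope c L)) (cut (blister_curvature c L)) \<Omega>"
    using E_inf_1D_le_energy \<alpha>m h \<alpha>s by blast
  also have "\<dots> = \<alpha>m * \<eta>^2 * \<theta> * h + 84 * h^3 * \<eta> / (1 - \<theta>)"
  proof -
    have "(\<lambda>x. (w' x + (cut (blister_slope c L) x)^2 / 2 - \<eta>)^2) = (\<lambda>x. if x \<le> L then 0 else \<eta>^2)"
      by (auto simp: w'_def cut_def)
    then have membrane: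
      "(LINT x:{0..1}|lborel. (w' x + (cut (blister_slope c L) x)^2 / 2 - \<eta>)^2) = \<eta>^2 * \<theta>"
      using set_integral_truncated(2)[of "\<lambda>_. 0" L 1 "\<eta>^2"] L by (simp add: L_def)
    have bending: "(LINT x:{0..1}|lborel. (cut (blister_curvature c L) x)^2) = 84 * \<eta> / L"
      unfolding cut_def set_integral_truncated_blister_curvature_sq[OF L(1,2)] balanced(2) ..
    have "(LINT x:\<Omega>|lborel. (w x)^2) = (LINT x:\<Omega>|lborel. 0)"
      by (rule set_lebesgue_integral_cong)
        (auto simp: \<Omega>_def w_def cut_def blister_endpoints(5) balanced(1))
    then have bonding: "(LINT x:\<Omega>|lborel. (w x)^2) = 0" by simp
    show ?thesis
      unfolding energy_1D_def membrane bending bonding by (simp add: L_def)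
  qed
  finally show ?thesis .
qed

theorem theorem1:
  shows "\<exists>K2>0. \<forall>\<alpha>m \<theta> h \<alpha>s \<eta> :: real.
     \<alpha>m > 0 \<longrightarrow> 0 < \<theta> \<longrightarrow> \<theta> < 1 \<longrightarrow> h > 0 \<longrightarrow> \<alpha>s > 0 \<longrightarrow> \<eta> > 0 \<longrightarrow>
     E_inf_1D \<alpha>m h \<alpha>s \<eta> \<theta>
       \<le> min (\<alpha>m * \<eta>^2) (\<alpha>m * \<eta>^2 * \<theta> + K2 * h^2 * \<eta> / (1 - \<theta>)) * h"
proof (intro exI[of _ 84] conjI allI impI)
  fix \<alpha>m \<theta> h \<alpha>s \<eta> :: real
  assume "\<alpha>m > 0" "0 < \<theta>" "\<theta> < 1" "h > 0" "\<alpha>s > 0" "\<eta> > 0"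
  then have "E_inf_1D \<alpha>m h \<alpha>s \<eta> \<theta> \<le> \<alpha>m * \<eta>^2 * h"
    and "E_inf_1D \<alpha>m h \<alpha>s \<eta> \<theta> \<le> (\<alpha>m * \<eta>^2 * \<theta> + 84 * h^2 * \<eta> / (1 - \<theta>)) * h"
    using E_inf_1D_le_flat[of \<alpha>m h \<alpha>s \<theta> \<eta>] E_inf_1D_le_blister[of \<alpha>m h \<alpha>s \<theta> \<eta>]
    by (simp_all add: algebra_simps power2_eq_square power3_eq_cube)
  then show "E_inf_1D \<alpha>m h \<alpha>s \<eta> \<theta>
      \<le> min (\<alpha>m * \<eta>^2) (\<alpha>m * \<eta>^2 * \<theta> + 84 * h^2 * \<eta> / (1 - \<theta>)) * h"
    by (simp add: min_def)
qed simp

end
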